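(* Let $K$ be an $\mathcal R$-dioid (i.e., a $*$-continuous Kleene algebra). For each $\phi\in K\otimes_{\mathcal R}C_2'$ there are $n\in\mathbb N$, $S\in\{0,1\}^{1\times n}$, $F\in\{0,1\}^{n\times 1}$, $U\in\{0,b,p\}^{n\times n}$, $V\in\{0,d,q\}^{n\times n}$ and $X\in K^{n\times n}$ such that \[ \phi=S(U+X+V)^*F \] (computed in the matrix Kleene algebra over $K\otimes_{\mathcal R}C_2'$).
   Context: An $\mathcal R$-dioid is a dioid in which every regular subset of its multiplicative monoid has a supremum $\sum A$ with $\sum(AB)=(\sum A)(\sum B)$; equivalently a $*$-continuous Kleene algebra. An $\mathcal R$-congruence is a semiring congruence such that regular sets with equal downward closures modulo it have congruent suprema. $C_2'=\mathcal R\Delta_2^*/\rho$ where $\Delta_2=\{b,p,d,q\}$, $\mathcal R\Delta_2^*$ is the algebra of regular languages over $\Delta_2$, and $\rho$ is the least $\mathcal R$-congruence containing $bd=pq=1$, $bq=pd=0$. $K\otimes_{\mathcal R}C_2'$ is the tensor product of $\mathcal R$-dioids (universal $\mathcal R$-dioid with $\mathcal R$-morphisms from $K$ and $C_2'$ whose images commute elementwise); elements of $K$ and $C_2'$ are identified with their images. Matrices over a Kleene algebra form a Kleene algebra with matrix sum, product and the standard (block-recursive) matrix star. *)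

theory Defs
  imports Main
begin

class dioid = semiring_0 + monoid_mult +
  assumes add_idem: "x + x = x"

context dioid
begin

definition dle :: "'a \<Rightarrow> 'a \<Rightarrow> bool" where
  "dle x y \<longleftrightarrow> x + y = y"

definition is_lub :: "'a set \<Rightarrow> 'a \<Rightarrow> bool" where
  "is_lub A s \<longleftrightarrow> (\<forall>a\<in>A. dle a s) \<and> (\<forall>u. (\<forall>a\<in>A. dle a u) \<longrightarrow> dle s u)"

definition rsum :: "'a set \<Rightarrow> 'a" where
  "rsum A = (THE s. is_lub A s)"

definition set_times :: "'a set \<Rightarrow> 'a set \<Rightarrow> 'a set" where
  "set_times A B = {x * y | x y. x \<in> A \<and> y \<in> B}"

inductive_set submonoid_gen :: "'a set \<Rightarrow> 'a set" for A where
  sg_one: "1 \<in> submonoid_gen A"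
| sg_step: "a \<in> A \<Longrightarrow> x \<in> submonoid_gen A \<Longrightarrow> a * x \<in> submonoid_gen A"

inductive regular_set :: "'a set \<Rightarrow> bool" where
  reg_finite: "finite A \<Longrightarrow> regular_set A"
| reg_union: "regular_set A \<Longrightarrow> regular_set B \<Longrightarrow> regular_set (A \<union> B)"
| reg_times: "regular_set A \<Longrightarrow> regular_set B \<Longrightarrow> regular_set (set_times A B)"
| reg_star: "regular_set A \<Longrightarrow> regular_set (submonoid_gen A)"

end

class r_dioid = dioid +
  assumes r_sup_exists: "regular_set (A::'a set) \<Longrightarrow> \<exists>s. is_lub A s"
  and r_sup_mult: "regular_set (A::'a set) \<Longrightarrow> regular_set (B::'a set) \<Longrightarrow>
                   rsum (set_times A B) = rsum A * rsum B"

definition kstar :: "'a::r_dioid \<Rightarrow> 'a" where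
  "kstar a = rsum (submonoid_gen {a})"

section \<open>Regular languages: the free R-dioid R X*\<close>

definition conc :: "'x list set \<Rightarrow> 'x list set \<Rightarrow> 'x list set" where
  "conc L M = {u @ v | u v. u \<in> L \<and> v \<in> M}"

inductive_set lstar :: "'x list set \<Rightarrow> 'x list set" for L where
  lstar_nil: "[] \<in> lstar L"
| lstar_step: "u \<in> L \<Longrightarrow> v \<in> lstar L \<Longrightarrow> u @ v \<in> lstar L"

inductive reg_lang :: "'x list set \<Rightarrow> bool" where
  rl_finite: "finite L \<Longrightarrow> reg_lang L"
| rl_union: "reg_lang L \<Longrightarrow> reg_lang M \<Longrightarrow> reg_lang (L \<union> M)"
| rl_conc: "reg_lang L \<Longrightarrow> reg_lang M \<Longrightarrow> reg_lang (conc L M)"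
| rl_star: "reg_lang L \<Longrightarrow> reg_lang (lstar L)"

text \<open>Regular subsets of the multiplicative monoid of R X*.\<close>
definition fam_times :: "'x list set set \<Rightarrow> 'x list set set \<Rightarrow> 'x list set set" where
  "fam_times \<A> \<B> = {conc L M | L M. L \<in> \<A> \<and> M \<in> \<B>}"

inductive_set fam_star :: "'x list set set \<Rightarrow> 'x list set set" for \<A> where
  fs_one: "{[]} \<in> fam_star \<A>"
| fs_step: "L \<in> \<A> \<Longrightarrow> M \<in> fam_star \<A> \<Longrightarrow> conc L M \<in> fam_star \<A>"

inductive reg_fam :: "'x list set set \<Rightarrow> bool" where
  rf_finite: "finite \<A> \<Longrightarrow> (\<forall>L\<in>\<A>. reg_lang L) \<Longrightarrow> reg_fam \<A>"
| rf_union: "reg_fam \<A> \<Longrightarrow> reg_fam \<B> \<Longrightarrow> reg_fam (\<A> \<union> \<B>)"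
| rf_times: "reg_fam \<A> \<Longrightarrow> reg_fam \<B> \<Longrightarrow> reg_fam (fam_times \<A> \<B>)"
| rf_star: "reg_fam \<A> \<Longrightarrow> reg_fam (fam_star \<A>)"

text \<open>R-congruences on R X*: semiring congruences such that regular sets with
  equal downward closures modulo the congruence have congruent suprema (unions).
  In the quotient, [L] \<le> [M] iff (L \<union> M, M) is in the congruence.\<close>
definition r_congruence :: "('x list set \<times> 'x list set) set \<Rightarrow> bool" where
  "r_congruence \<theta> \<longleftrightarrow>
     equiv {L. reg_lang L} \<theta> \<and>
     (\<forall>L L' M M'. (L, L') \<in> \<theta> \<longrightarrow> (M, M') \<in> \<theta> \<longrightarrow>
        (L \<union> M, L' \<union> M') \<in> \<theta> \<and> (conc L M, conc L' M') \<in> \<theta>) \<and>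
     (\<forall>\<A> \<B>. reg_fam \<A> \<longrightarrow> reg_fam \<B> \<longrightarrow>
        (\<forall>L\<in>\<A>. \<exists>M\<in>\<B>. (L \<union> M, M) \<in> \<theta>) \<longrightarrow>
        (\<forall>M\<in>\<B>. \<exists>L\<in>\<A>. (M \<union> L, L) \<in> \<theta>) \<longrightarrow>
        (\<Union>\<A>, \<Union>\<B>) \<in> \<theta>)"

definition least_r_congruence :: "('x list set \<times> 'x list set) set \<Rightarrow> ('x list set \<times> 'x list set) set" where
  "least_r_congruence R0 = \<Inter> {\<theta>. r_congruence \<theta> \<and> R0 \<subseteq> \<theta>}"

datatype delta = Db | Dp | Dd | Dq

text \<open>Presentation of K \<otimes>_R C_2' as a quotient of the free R-dioid on the
  alphabet K + \<Delta>_2: relations of C_2', relations making the inclusion of K an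
  R-morphism (0, 1, +, *, star), and commutation of K with the generators of C_2'.\<close>
definition tens_rel :: "(('k::r_dioid + delta) list set \<times> ('k + delta) list set) set" where
  "tens_rel =
     {({[Inr Db, Inr Dd]}, {[]}), ({[Inr Dp, Inr Dq]}, {[]}),
      ({[Inr Db, Inr Dq]}, {}), ({[Inr Dp, Inr Dd]}, {})}
   \<union> {({[Inl 0]}, {}), ({[Inl 1]}, {[]})}
   \<union> {({[Inl (x + y)]}, {[Inl x], [Inl y]}) | x y. True}
   \<union> {({[Inl (x * y)]}, {[Inl x, Inl y]}) | x y. True}
   \<union> {({[Inl (kstar x)]}, lstar {[Inl x]}) | x. True}
   \<union> {({[Inl k, Inr e]}, {[Inr e, Inl k]}) | k e. True}"

definition tens_cong :: "(('k::r_dioid + delta) list set \<times> ('k + delta) list set) set" where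
  "tens_cong = least_r_congruence tens_rel"

definition tensor_carrier :: "('k::r_dioid + delta) list set set set" where
  "tensor_carrier = {L. reg_lang L} // tens_cong"

definition tcls :: "('k::r_dioid + delta) list set \<Rightarrow> ('k + delta) list set set" where
  "tcls L = tens_cong `` {L}"

definition trep :: "('k::r_dioid + delta) list set set \<Rightarrow> ('k + delta) list set" where
  "trep x = (SOME L. L \<in> x)"

definition t_zero :: "('k::r_dioid + delta) list set set" where
  "t_zero = tcls {}"

definition t_one :: "('k::r_dioid + delta) list set set" where
  "t_one = tcls {[]}"

definition t_plus :: "('k::r_dioid + delta) list set set \<Rightarrow> ('k + delta) list set set \<Rightarrow> ('k + delta) list set set" where
  "t_plus x y = tcls (trep x \<union> trep y)"

definition t_times :: "('k::r_dioid + delta) list set set \<Rightarrow> ('k + delta) list set set \<Rightarrow> ('k + delta) list set set" where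
  "t_times x y = tcls (conc (trep x) (trep y))"

definition t_star :: "('k::r_dioid + delta) list set set \<Rightarrow> ('k + delta) list set set" where
  "t_star x = tcls (lstar (trep x))"

definition embK :: "'k::r_dioid \<Rightarrow> ('k + delta) list set set" where
  "embK k = tcls {[Inl k]}"

definition gen :: "delta \<Rightarrow> ('k::r_dioid + delta) list set set" where
  "gen e = tcls {[Inr e]}"

type_synonym 'k tmat = "nat \<Rightarrow> nat \<Rightarrow> ('k + delta) list set set"

fun t_sum :: "nat \<Rightarrow> (nat \<Rightarrow> ('k::r_dioid + delta) list set set) \<Rightarrow> ('k + delta) list set set" where
  "t_sum 0 f = t_zero"
| "t_sum (Suc n) f = t_plus (t_sum n f) (f n)"

text \<open>Standard block-recursive matrix star for n\<times>n matrices (indices < n),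
  splitting off the first row and column:
  [[a,B],[C,D]]* = [[e, e B D*],[D* C e, D* + D* C e B D*]], e = (a + B D* C)*.\<close>
fun mat_star :: "nat \<Rightarrow> ('k::r_dioid) tmat \<Rightarrow> 'k tmat" where
  "mat_star 0 M = (\<lambda>i j. t_zero)"
| "mat_star (Suc n) M =
     (let a = M 0 0;
          B = (\<lambda>j. M 0 (Suc j));
          C = (\<lambda>i. M (Suc i) 0);
          Ds = mat_star n (\<lambda>i j. M (Suc i) (Suc j));
          BDs = (\<lambda>j. t_sum n (\<lambda>k. t_times (B k) (Ds k j)));
          DsC = (\<lambda>i. t_sum n (\<lambda>k. t_times (Ds i k) (C k)));
          e = t_star (t_plus a (t_sum n (\<lambda>k. t_times (BDs k) (C k))))
      in (\<lambda>i j. if i = 0 \<and> j = 0 then e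
               else if i = 0 then t_times e (BDs (j - 1))
               else if j = 0 then t_times (DsC (i - 1)) e
               else t_plus (Ds (i - 1) (j - 1))
                           (t_times (DsC (i - 1)) (t_times e (BDs (j - 1))))))"

definition row_mat_col :: "nat \<Rightarrow> (nat \<Rightarrow> ('k::r_dioid + delta) list set set) \<Rightarrow> 'k tmat \<Rightarrow>
    (nat \<Rightarrow> ('k + delta) list set set) \<Rightarrow> ('k + delta) list set set" where
  "row_mat_col n S M F = t_sum n (\<lambda>j. t_times (t_sum n (\<lambda>i. t_times (S i) (M i j))) (F j))"

end

(*
  The class phi is represented by a regular language L over the alphabet K + {b, p, d, q}.
  Tagging each left quotient of L with the last letter read gives a finite automaton in which
  every transition reads one letter, and that letter depends only on the target state; L is
  the set of labels of walks from the initial state to a final one. The walk languages of an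
  automaton satisfy the block-recursive star equations, and the class map into the tensor
  product preserves union, concatenation and star, so the star of the matrix of letter classes
  is the matrix of classes of walk languages. Sorting the letters into b/p, elements of K and
  d/q splits the letter matrix as U + X + V.
*)

theory Submission
  imports Defs "HOL-Library.Sublist"
begin

lemma concI: "u \<in> A \<Longrightarrow> v \<in> B \<Longrightarrow> u @ v \<in> conc A B"
  unfolding conc_def by blast

lemma concE: "w \<in> conc A B \<Longrightarrow> (\<And>u v. w = u @ v \<Longrightarrow> u \<in> A \<Longrightarrow> v \<in> B \<Longrightarrow> P) \<Longrightarrow> P"
  unfolding conc_def by blast

lemma conc_Nil_left [simp]: "conc {[]} A = A"
  and conc_Nil_right [simp]: "conc A {[]} = A"
  and conc_empty_left [simp]: "conc {} A = {}"
  and conc_empty_right [simp]: "conc A {} = {}"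
  unfolding conc_def by auto

lemma r_congruence_compat:
  assumes "r_congruence \<theta>" "(L, L') \<in> \<theta>" "(M, M') \<in> \<theta>"
  shows "(L \<union> M, L' \<union> M') \<in> \<theta>" "(conc L M, conc L' M') \<in> \<theta>"
  using assms by (simp_all add: r_congruence_def)

lemma r_congruence_reg_lang:
  "r_congruence \<theta> \<Longrightarrow> (L, M) \<in> \<theta> \<Longrightarrow> reg_lang L \<and> reg_lang M"
  unfolding r_congruence_def by (auto dest: equiv_type)

lemma r_congruence_refl: "r_congruence \<theta> \<Longrightarrow> reg_lang L \<Longrightarrow> (L, L) \<in> \<theta>"
  unfolding r_congruence_def equiv_def refl_on_def by blast

lemma r_congruence_sym: "r_congruence \<theta> \<Longrightarrow> (L, M) \<in> \<theta> \<Longrightarrow> (M, L) \<in> \<theta>"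
  unfolding r_congruence_def equiv_def by (meson symD)

lemma r_congruence_trans: "r_congruence \<theta> \<Longrightarrow> (L, M) \<in> \<theta> \<Longrightarrow> (M, N) \<in> \<theta> \<Longrightarrow> (L, N) \<in> \<theta>"
  unfolding r_congruence_def equiv_def by (meson transD)

lemma r_congruence_union_absorb: "r_congruence \<theta> \<Longrightarrow> (L, M) \<in> \<theta> \<Longrightarrow> (L \<union> M, M) \<in> \<theta>"
  by (metis r_congruence_compat(1) r_congruence_sym r_congruence_trans sup.idem)

lemma Union_fam_star_singleton: "\<Union>(fam_star {L}) = lstar L"
proof
  show "\<Union>(fam_star {L}) \<subseteq> lstar L"
  proof
    fix w assume "w \<in> \<Union>(fam_star {L})"
    then obtain X where "X \<in> fam_star {L}" "w \<in> X" by blast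
    then show "w \<in> lstar L"
      by (induction arbitrary: w rule: fam_star.induct) (auto simp: conc_def intro: lstar.intros)
  qed
  show "lstar L \<subseteq> \<Union>(fam_star {L})"
  proof
    fix w assume "w \<in> lstar L"
    then show "w \<in> \<Union>(fam_star {L})"
    proof (induction rule: lstar.induct)
      case lstar_nil
      then show ?case using fam_star.fs_one by blast
    next
      case (lstar_step u v)
      then obtain X where "X \<in> fam_star {L}" "v \<in> X" by blast
      moreover from \<open>X \<in> fam_star {L}\<close> have "conc L X \<in> fam_star {L}"
        by (rule fam_star.fs_step[rotated]) simp
      moreover have "u @ v \<in> conc L X" using lstar_step.hyps(1) \<open>v \<in> X\<close> by (rule concI)
      ultimately show ?case by blast
    qed
  qed
qed

lemma fam_star_singleton_related:
  assumes "r_congruence \<theta>" "(L, L') \<in> \<theta>" "X \<in> fam_star {L}"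
  shows "\<exists>Y\<in>fam_star {L'}. (X, Y) \<in> \<theta>"
  using assms(3)
proof (induction rule: fam_star.induct)
  case fs_one
  have "({[]}, {[]}) \<in> \<theta>" using assms(1) by (simp add: r_congruence_refl rl_finite)
  then show ?case using fam_star.fs_one by blast
next
  case (fs_step A M)
  then obtain Y where "Y \<in> fam_star {L'}" "(M, Y) \<in> \<theta>" by blast
  then show ?case
    using fs_step.hyps r_congruence_compat(2)[OF assms(1,2)] fam_star.fs_step[of L' "{L'}" Y] by blast
qed

(* The star is the supremum of the regular family of powers, and the families of powers of
   related languages dominate each other, so the supremum axiom applies. *)
lemma r_congruence_lstar:
  assumes \<theta>: "r_congruence \<theta>" and LL': "(L, L') \<in> \<theta>"
  shows "(lstar L, lstar L') \<in> \<theta>"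
proof -
  have dominated: "\<forall>X\<in>fam_star {A}. \<exists>Y\<in>fam_star {B}. (X \<union> Y, Y) \<in> \<theta>" if "(A, B) \<in> \<theta>" for A B
    using fam_star_singleton_related[OF \<theta> that] r_congruence_union_absorb[OF \<theta>] by blast
  have "reg_fam (fam_star {A})" if "reg_lang A" for A :: "'a list set"
    using that by (intro rf_star rf_finite) auto
  then have "(\<Union>(fam_star {L}), \<Union>(fam_star {L'})) \<in> \<theta>"
    using \<theta> LL' dominated r_congruence_sym[OF \<theta> LL'] r_congruence_reg_lang[OF \<theta> LL']
    unfolding r_congruence_def by blast
  then show ?thesis by (simp add: Union_fam_star_singleton)
qed

lemma least_r_congruenceI:
  "(\<And>\<theta>. r_congruence \<theta> \<Longrightarrow> R0 \<subseteq> \<theta> \<Longrightarrow> p \<in> \<theta>) \<Longrightarrow> p \<in> least_r_congruence R0"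
  unfolding least_r_congruence_def by blast

lemma least_r_congruenceD:
  "p \<in> least_r_congruence R0 \<Longrightarrow> r_congruence \<theta> \<Longrightarrow> R0 \<subseteq> \<theta> \<Longrightarrow> p \<in> \<theta>"
  unfolding least_r_congruence_def by blast

lemma least_r_congruence_base: "R0 \<subseteq> least_r_congruence R0"
  by (blast intro: least_r_congruenceI)

lemma least_r_congruence_refl: "reg_lang L \<Longrightarrow> (L, L) \<in> least_r_congruence R0"
  by (meson least_r_congruenceI r_congruence_refl)

lemma least_r_congruence_sym:
  "(L, M) \<in> least_r_congruence R0 \<Longrightarrow> (M, L) \<in> least_r_congruence R0"
  by (meson least_r_congruenceI least_r_congruenceD r_congruence_sym)

lemma least_r_congruence_trans:
  "(L, M) \<in> least_r_congruence R0 \<Longrightarrow> (M, N) \<in> least_r_congruence R0 \<Longrightarrow> (L, N) \<in> least_r_congruence R0"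
  by (meson least_r_congruenceI least_r_congruenceD r_congruence_trans)

lemma least_r_congruence_compat:
  assumes "(L, L') \<in> least_r_congruence R0" "(M, M') \<in> least_r_congruence R0"
  shows "(L \<union> M, L' \<union> M') \<in> least_r_congruence R0" "(conc L M, conc L' M') \<in> least_r_congruence R0"
  using assms by (meson least_r_congruenceI least_r_congruenceD r_congruence_compat)+

lemma least_r_congruence_lstar:
  "(L, L') \<in> least_r_congruence R0 \<Longrightarrow> (lstar L, lstar L') \<in> least_r_congruence R0"
  by (meson least_r_congruenceI least_r_congruenceD r_congruence_lstar)

(* If no R-congruence contains tens_rel, then tens_cong is an empty intersection, hence the
   universal relation; the lemmas below do not exclude this case. *)
lemma tcls_eq: "(L, M) \<in> tens_cong \<Longrightarrow> tcls L = tcls M"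
  unfolding tcls_def tens_cong_def
  by (blast intro: least_r_congruence_sym least_r_congruence_trans)

lemma tcls_trep:
  assumes "reg_lang L"
  shows "(L, trep (tcls L)) \<in> tens_cong"
proof -
  from assms have "L \<in> tcls L" by (simp add: tcls_def tens_cong_def least_r_congruence_refl)
  then have "trep (tcls L) \<in> tcls L" unfolding trep_def by (rule someI)
  then show ?thesis by (simp add: tcls_def)
qed

lemma t_plus_tcls: "reg_lang L \<Longrightarrow> reg_lang M \<Longrightarrow> t_plus (tcls L) (tcls M) = tcls (L \<union> M)"
  unfolding t_plus_def
  by (metis tcls_eq tcls_trep tens_cong_def least_r_congruence_compat(1))

lemma t_times_tcls: "reg_lang L \<Longrightarrow> reg_lang M \<Longrightarrow> t_times (tcls L) (tcls M) = tcls (conc L M)"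
  unfolding t_times_def
  by (metis tcls_eq tcls_trep tens_cong_def least_r_congruence_compat(2))

lemma t_star_tcls: "reg_lang L \<Longrightarrow> t_star (tcls L) = tcls (lstar L)"
  unfolding t_star_def
  by (metis tcls_eq tcls_trep tens_cong_def least_r_congruence_lstar)

lemma reg_lang_UN: "(\<And>k. k < (n::nat) \<Longrightarrow> reg_lang (L k)) \<Longrightarrow> reg_lang (\<Union>k<n. L k)"
  by (induction n) (auto simp: lessThan_Suc rl_finite intro: rl_union)

lemma t_sum_tcls:
  assumes "\<And>k. k < n \<Longrightarrow> reg_lang (L k)" "\<And>k. k < n \<Longrightarrow> f k = tcls (L k)"
  shows "t_sum n f = tcls (\<Union>k<n. L k)"
  using assms
proof (induction n)
  case 0
  then show ?case by (simp add: t_zero_def)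
next
  case (Suc n)
  then show ?case by (simp add: lessThan_Suc Un_commute t_plus_tcls reg_lang_UN)
qed

section \<open>Walk languages and the block-recursive star\<close>

inductive walk :: "nat \<Rightarrow> (nat \<Rightarrow> nat \<Rightarrow> 'a list set) \<Rightarrow> nat \<Rightarrow> 'a list \<Rightarrow> nat \<Rightarrow> bool"
  for n M where
  walk_Nil: "i < n \<Longrightarrow> walk n M i [] i"
| walk_step: "i < n \<Longrightarrow> k < n \<Longrightarrow> u \<in> M i k \<Longrightarrow> walk n M k v j \<Longrightarrow> walk n M i (u @ v) j"

definition walks :: "nat \<Rightarrow> (nat \<Rightarrow> nat \<Rightarrow> 'a list set) \<Rightarrow> nat \<Rightarrow> nat \<Rightarrow> 'a list set" where
  "walks n M i j = {w. walk n M i w j}"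

lemma walk_bounds: "walk n M i w j \<Longrightarrow> i < n \<and> j < n"
  by (induction rule: walk.induct) auto

lemma walk_append: "walk n M i u k \<Longrightarrow> walk n M k v j \<Longrightarrow> walk n M i (u @ v) j"
  by (induction rule: walk.induct) (auto intro: walk.intros)

lemma walk_single: "i < n \<Longrightarrow> j < n \<Longrightarrow> u \<in> M i j \<Longrightarrow> walk n M i u j"
  using walk_step[OF _ _ _ walk_Nil] by (metis append_Nil2)

lemma walk_lstar: "w \<in> lstar A \<Longrightarrow> (\<And>u. u \<in> A \<Longrightarrow> walk n M i u i) \<Longrightarrow> i < n \<Longrightarrow> walk n M i w i"
  by (induction rule: lstar.induct) (auto intro: walk_Nil walk_append[of n M i _ i])

definition tail_mat :: "(nat \<Rightarrow> nat \<Rightarrow> 'a) \<Rightarrow> nat \<Rightarrow> nat \<Rightarrow> 'a" where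
  "tail_mat M = (\<lambda>i j. M (Suc i) (Suc j))"

lemma walk_tail_mat: "walk n (tail_mat M) i w j \<Longrightarrow> walk (Suc n) M (Suc i) w (Suc j)"
  by (induction rule: walk.induct) (auto simp: tail_mat_def intro: walk.intros)

(* With a = M 0 0 and B, C, D the remaining blocks of M, these are the language versions of
   B D*, D* C and a + B D* C in the definition of mat_star. *)
definition walks_from_head :: "nat \<Rightarrow> (nat \<Rightarrow> nat \<Rightarrow> 'a list set) \<Rightarrow> nat \<Rightarrow> 'a list set" where
  "walks_from_head n M j = (\<Union>k<n. conc (M 0 (Suc k)) (walks n (tail_mat M) k j))"

definition walks_to_head :: "nat \<Rightarrow> (nat \<Rightarrow> nat \<Rightarrow> 'a list set) \<Rightarrow> nat \<Rightarrow> 'a list set" where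
  "walks_to_head n M i = (\<Union>k<n. conc (walks n (tail_mat M) i k) (M (Suc k) 0))"

definition head_loop :: "nat \<Rightarrow> (nat \<Rightarrow> nat \<Rightarrow> 'a list set) \<Rightarrow> 'a list set" where
  "head_loop n M = M 0 0 \<union> (\<Union>k<n. conc (walks_from_head n M k) (M (Suc k) 0))"

definition head_exit :: "nat \<Rightarrow> (nat \<Rightarrow> nat \<Rightarrow> 'a list set) \<Rightarrow> nat \<Rightarrow> 'a list set" where
  "head_exit n M j = (case j of 0 \<Rightarrow> {[]} | Suc j' \<Rightarrow> walks_from_head n M j')"

definition block_walks :: "nat \<Rightarrow> (nat \<Rightarrow> nat \<Rightarrow> 'a list set) \<Rightarrow> nat \<Rightarrow> nat \<Rightarrow> 'a list set" where
  "block_walks n M i j =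
     (case i of
        0 \<Rightarrow> conc (lstar (head_loop n M)) (head_exit n M j)
      | Suc i' \<Rightarrow> (case j of 0 \<Rightarrow> {} | Suc j' \<Rightarrow> walks n (tail_mat M) i' j')
                 \<union> conc (walks_to_head n M i') (conc (lstar (head_loop n M)) (head_exit n M j)))"

lemma walks_from_head_Cons:
  "k < n \<Longrightarrow> u \<in> M 0 (Suc k) \<Longrightarrow> v \<in> walks n (tail_mat M) k j \<Longrightarrow> u @ v \<in> walks_from_head n M j"
  unfolding walks_from_head_def by (blast intro: concI)

lemma walks_to_head_Cons:
  assumes "i < n" "k < n" "u \<in> M (Suc i) (Suc k)" "v \<in> walks_to_head n M k"
  shows "u @ v \<in> walks_to_head n M i"
proof -
  from assms(4) obtain l p c where "l < n" "v = p @ c" "walk n (tail_mat M) k p l" "c \<in> M (Suc l) 0"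
    unfolding walks_to_head_def walks_def by (blast elim: concE)
  moreover from calculation assms(1-3) have "walk n (tail_mat M) i (u @ p) l"
    by (auto simp: tail_mat_def intro: walk_step)
  ultimately show ?thesis
    unfolding walks_to_head_def walks_def by (auto simp flip: append_assoc intro!: concI)
qed

lemma walks_to_head_single:
  assumes "i < n" "u \<in> M (Suc i) 0"
  shows "u \<in> walks_to_head n M i"
proof -
  have "[] \<in> walks n (tail_mat M) i i" using assms(1) by (simp add: walks_def walk_Nil)
  from concI[OF this assms(2)] show ?thesis using assms(1) unfolding walks_to_head_def by auto
qed

lemma head_loop_Cons:
  assumes "k < n" "u \<in> M 0 (Suc k)" "v \<in> walks_to_head n M k"
  shows "u @ v \<in> head_loop n M"
proof -
  from assms(3) obtain l p c where "l < n" "v = p @ c" "p \<in> walks n (tail_mat M) k l" "c \<in> M (Suc l) 0"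
    unfolding walks_to_head_def by (blast elim: concE)
  moreover from calculation assms(1,2) have "u @ p \<in> walks_from_head n M l"
    by (intro walks_from_head_Cons)
  ultimately show ?thesis
    unfolding head_loop_def by (auto simp flip: append_assoc intro: concI)
qed

lemma block_walks_Nil: "i < Suc n \<Longrightarrow> [] \<in> block_walks n M i i"
  by (cases i) (auto simp: block_walks_def head_exit_def walks_def walk_Nil
      intro: concI[of "[]" _ "[]", simplified] lstar_nil)

lemma block_walks_head_step:
  assumes "k < Suc n" "u \<in> M 0 k" "v \<in> block_walks n M k j"
  shows "u @ v \<in> block_walks n M 0 j"
proof (cases k)
  case 0
  then have "u \<in> head_loop n M" using assms(2) by (simp add: head_loop_def)
  with assms(3) 0 show ?thesis
    by (auto simp: block_walks_def elim!: concE intro!: concI[of "u @ _", simplified] lstar_step)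
next
  case (Suc k')
  consider j' where "j = Suc j'" "v \<in> walks n (tail_mat M) k' j'"
    | x e r where "v = x @ e @ r" "x \<in> walks_to_head n M k'" "e \<in> lstar (head_loop n M)" "r \<in> head_exit n M j"
    using assms(3) Suc by (auto simp: block_walks_def split: nat.splits elim!: concE)
  then show ?thesis
  proof cases
    case 1
    then have "u @ v \<in> head_exit n M j"
      using assms Suc by (simp add: head_exit_def walks_from_head_Cons)
    then show ?thesis
      by (auto simp: block_walks_def intro: concI[of "[]", simplified] lstar_nil)
  next
    case 2
    then have "u @ x \<in> head_loop n M" using assms Suc by (auto intro: head_loop_Cons)
    then have "(u @ x) @ e \<in> lstar (head_loop n M)" using 2(3) by (rule lstar_step)
    then show ?thesis using 2 by (auto simp: block_walks_def intro: concI[of "(u @ x) @ e", simplified])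
  qed
qed

lemma block_walks_tail_step:
  assumes "i < n" "k < Suc n" "u \<in> M (Suc i) k" "v \<in> block_walks n M k j"
  shows "u @ v \<in> block_walks n M (Suc i) j"
proof (cases k)
  case 0
  then have "u \<in> walks_to_head n M i" using assms(1,3) by (simp add: walks_to_head_single)
  with assms(4) 0 show ?thesis by (auto simp: block_walks_def intro: concI)
next
  case (Suc k')
  consider j' where "j = Suc j'" "v \<in> walks n (tail_mat M) k' j'"
    | x e r where "v = x @ e @ r" "x \<in> walks_to_head n M k'" "e \<in> lstar (head_loop n M)" "r \<in> head_exit n M j"
    using assms(4) Suc by (auto simp: block_walks_def split: nat.splits elim!: concE)
  then show ?thesis
  proof cases
    case 1
    then have "u @ v \<in> walks n (tail_mat M) i j'"
      using assms Suc by (auto simp: walks_def tail_mat_def intro: walk_step)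
    then show ?thesis using 1 by (simp add: block_walks_def)
  next
    case 2
    then have "u @ x \<in> walks_to_head n M i"
      using assms Suc by (auto intro: walks_to_head_Cons)
    moreover have "e @ r \<in> conc (lstar (head_loop n M)) (head_exit n M j)"
      using 2 by (blast intro: concI)
    ultimately have "(u @ x) @ e @ r \<in> conc (walks_to_head n M i) (conc (lstar (head_loop n M)) (head_exit n M j))"
      by (rule concI)
    then show ?thesis using 2(1) by (simp add: block_walks_def)
  qed
qed

lemma walk_Suc_block_walks: "walk (Suc n) M i w j \<Longrightarrow> w \<in> block_walks n M i j"
proof (induction rule: walk.induct)
  case (walk_Nil i)
  then show ?case by (rule block_walks_Nil)
next
  case (walk_step i k u v j)
  then show ?case
    by (cases i) (auto intro: block_walks_head_step block_walks_tail_step)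
qed

lemma walk_from_head: "w \<in> walks_from_head n M j \<Longrightarrow> walk (Suc n) M 0 w (Suc j)"
  unfolding walks_from_head_def walks_def
  by (auto elim!: concE intro: walk_step walk_tail_mat)

lemma walk_to_head: "w \<in> walks_to_head n M i \<Longrightarrow> walk (Suc n) M (Suc i) w 0"
  unfolding walks_to_head_def walks_def
  by (auto elim!: concE intro: walk_append walk_tail_mat walk_single)

lemma walk_head_loops: "w \<in> lstar (head_loop n M) \<Longrightarrow> walk (Suc n) M 0 w 0"
  by (erule walk_lstar)
    (auto simp: head_loop_def elim!: concE intro: walk_single walk_append walk_from_head)

lemma walk_head_exit: "j < Suc n \<Longrightarrow> w \<in> head_exit n M j \<Longrightarrow> walk (Suc n) M 0 w j"
  by (auto simp: head_exit_def walk_Nil walk_from_head split: nat.splits)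

lemma block_walks_walk:
  assumes "j < Suc n" "w \<in> block_walks n M i j"
  shows "walk (Suc n) M i w j"
proof -
  have from_head: "walk (Suc n) M 0 v j" if "v \<in> conc (lstar (head_loop n M)) (head_exit n M j)" for v
    using that by (rule concE) (simp add: walk_append[OF walk_head_loops walk_head_exit[OF assms(1)]])
  show ?thesis
  proof (cases i)
    case 0
    then show ?thesis using assms(2) from_head by (simp add: block_walks_def)
  next
    case (Suc i')
    from assms(2) have "w \<in> (case j of 0 \<Rightarrow> {} | Suc j' \<Rightarrow> walks n (tail_mat M) i' j')
        \<union> conc (walks_to_head n M i') (conc (lstar (head_loop n M)) (head_exit n M j))"
      (is "w \<in> ?inner \<union> conc ?to_head ?rest") by (simp add: block_walks_def Suc)
    then show ?thesis
    proof
      assume "w \<in> ?inner"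
      then show ?thesis using Suc by (auto simp: walks_def split: nat.splits intro: walk_tail_mat)
    next
      assume "w \<in> conc ?to_head ?rest"
      then show ?thesis by (rule concE) (simp add: Suc walk_append[OF walk_to_head from_head])
    qed
  qed
qed

lemma walks_Suc: "i < Suc n \<Longrightarrow> j < Suc n \<Longrightarrow> walks (Suc n) M i j = block_walks n M i j"
  using walk_Suc_block_walks block_walks_walk by (auto simp: walks_def)

lemma walks_outside: "\<not> (i < n \<and> j < n) \<Longrightarrow> walks n M i j = {}"
  by (auto simp: walks_def dest: walk_bounds)

lemma reg_lang_block_pieces:
  assumes M: "\<And>i j. i < Suc n \<Longrightarrow> j < Suc n \<Longrightarrow> reg_lang (M i j)"
    and tail: "\<And>i j. reg_lang (walks n (tail_mat M) i j)"
  shows "reg_lang (walks_from_head n M j)" "reg_lang (walks_to_head n M i)"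
    "reg_lang (head_loop n M)" "reg_lang (head_exit n M j)"
proof -
  show from_head: "reg_lang (walks_from_head n M j)" for j
    unfolding walks_from_head_def by (intro reg_lang_UN rl_conc M tail) simp_all
  show "reg_lang (walks_to_head n M i)"
    unfolding walks_to_head_def by (intro reg_lang_UN rl_conc M tail) simp_all
  show "reg_lang (head_loop n M)"
    unfolding head_loop_def by (intro rl_union reg_lang_UN rl_conc M from_head) simp_all
  show "reg_lang (head_exit n M j)"
    by (simp add: head_exit_def from_head rl_finite split: nat.split)
qed

lemma reg_lang_walks:
  "(\<And>i j. i < n \<Longrightarrow> j < n \<Longrightarrow> reg_lang (M i j)) \<Longrightarrow> reg_lang (walks n M i j)"
proof (induction n arbitrary: M i j)
  case 0
  then show ?case by (simp add: walks_outside rl_finite)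
next
  case (Suc n)
  have tail: "reg_lang (walks n (tail_mat M) i j)" for i j
    by (rule Suc.IH) (simp add: tail_mat_def Suc.prems)
  note pieces = reg_lang_block_pieces[OF Suc.prems tail]
  show ?case
  proof (cases "i < Suc n \<and> j < Suc n")
    case True
    then show ?thesis
      by (simp add: walks_Suc block_walks_def pieces tail rl_star rl_conc rl_union rl_finite split: nat.split)
  next
    case False
    then show ?thesis by (simp add: walks_outside rl_finite)
  qed
qed

lemma mat_star_tcls:
  assumes "\<And>i j. i < n \<Longrightarrow> j < n \<Longrightarrow> reg_lang (M i j)" "i < n" "j < n"
  shows "mat_star n (\<lambda>i j. tcls (M i j)) i j = tcls (walks n M i j)"
  using assms
proof (induction n arbitrary: M i j)
  case 0
  then show ?case by simp
next
  case (Suc n)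
  have tail_reg: "reg_lang (tail_mat M i j)" if "i < n" "j < n" for i j
    using that Suc.prems(1) by (simp add: tail_mat_def)
  have tail_walks_reg: "reg_lang (walks n (tail_mat M) i j)" for i j
    using tail_reg by (rule reg_lang_walks)
  note pieces = reg_lang_block_pieces[OF Suc.prems(1) tail_walks_reg]
  let ?Ds = "mat_star n (\<lambda>i j. tcls (M (Suc i) (Suc j)))"
  have Ds: "?Ds i j = tcls (walks n (tail_mat M) i j)" if "i < n" "j < n" for i j
    using Suc.IH[of "tail_mat M", OF tail_reg that] by (simp add: tail_mat_def)
  have BDs: "t_sum n (\<lambda>k. t_times (tcls (M 0 (Suc k))) (?Ds k j)) = tcls (walks_from_head n M j)"
    if "j < n" for j
    unfolding walks_from_head_def
    using that by (intro t_sum_tcls) (simp_all add: Ds t_times_tcls Suc.prems(1) tail_walks_reg rl_conc)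
  have DsC: "t_sum n (\<lambda>k. t_times (?Ds i k) (tcls (M (Suc k) 0))) = tcls (walks_to_head n M i)"
    if "i < n" for i
    unfolding walks_to_head_def
    using that by (intro t_sum_tcls) (simp_all add: Ds t_times_tcls Suc.prems(1) tail_walks_reg rl_conc)
  have loop: "t_plus (tcls (M 0 0)) (t_sum n (\<lambda>k. t_times (t_sum n (\<lambda>l. t_times (tcls (M 0 (Suc l))) (?Ds l k)))
      (tcls (M (Suc k) 0)))) = tcls (head_loop n M)"
  proof -
    have "t_sum n (\<lambda>k. t_times (t_sum n (\<lambda>l. t_times (tcls (M 0 (Suc l))) (?Ds l k))) (tcls (M (Suc k) 0)))
        = tcls (\<Union>k<n. conc (walks_from_head n M k) (M (Suc k) 0))"
      by (intro t_sum_tcls) (simp_all add: BDs t_times_tcls pieces Suc.prems(1) rl_conc)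
    then show ?thesis
      by (simp add: head_loop_def t_plus_tcls Suc.prems(1) reg_lang_UN rl_conc pieces)
  qed
  show ?case
    using Suc.prems(2,3)
    by (cases i; cases j) (simp_all add: Let_def walks_Suc block_walks_def head_exit_def loop BDs DsC Ds
        t_star_tcls t_times_tcls t_plus_tcls pieces tail_walks_reg rl_star rl_conc rl_union)
qed

section \<open>Left quotients\<close>

definition lquot :: "'a list \<Rightarrow> 'a list set \<Rightarrow> 'a list set" where
  "lquot u L = {v. u @ v \<in> L}"

lemma lquot_Nil [simp]: "lquot [] L = L"
  by (simp add: lquot_def)

lemma lquot_lquot [simp]: "lquot v (lquot u L) = lquot (u @ v) L"
  by (simp add: lquot_def)

lemma lquot_union: "lquot u (L \<union> M) = lquot u L \<union> lquot u M"
  by (auto simp: lquot_def)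

lemma lquot_conc:
  "lquot u (conc L M) = conc (lquot u L) M \<union> \<Union>{lquot v M | v. \<exists>u'. u = u' @ v \<and> u' \<in> L}"
proof (intro set_eqI iffI)
  fix w assume "w \<in> lquot u (conc L M)"
  then obtain x y where xy: "u @ w = x @ y" "x \<in> L" "y \<in> M" by (auto simp: lquot_def elim: concE)
  then obtain us where "u = x @ us \<and> us @ w = y \<or> u @ us = x \<and> w = us @ y"
    by (auto simp: append_eq_append_conv2)
  then show "w \<in> conc (lquot u L) M \<union> \<Union>{lquot v M | v. \<exists>u'. u = u' @ v \<and> u' \<in> L}"
    using xy(2,3) unfolding lquot_def by (blast intro: concI)
next
  fix w assume "w \<in> conc (lquot u L) M \<union> \<Union>{lquot v M | v. \<exists>u'. u = u' @ v \<and> u' \<in> L}"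
  then show "w \<in> lquot u (conc L M)"
    unfolding lquot_def by (auto elim!: concE intro: concI[of "u @ _", simplified] concI)
qed

lemma lstar_append: "u \<in> lstar L \<Longrightarrow> v \<in> lstar L \<Longrightarrow> u @ v \<in> lstar L"
  by (induction rule: lstar.induct) (auto intro: lstar.intros)

lemma lstar_split:
  "u @ w \<in> lstar L \<Longrightarrow> (u \<in> lstar L \<and> w \<in> lstar L) \<or>
     (\<exists>u' v y z. u = u' @ v \<and> u' \<in> lstar L \<and> v @ y \<in> L \<and> w = y @ z \<and> z \<in> lstar L)"
proof (induction "u @ w" arbitrary: u w rule: lstar.induct)
  case lstar_nil
  then show ?case by (auto intro: lstar.intros)
next
  case (lstar_step a b)
  then obtain us where "(a = u @ us \<and> us @ b = w) \<or> (a @ us = u \<and> b = us @ w)"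
    by (auto simp: append_eq_append_conv2)
  then show ?case
  proof
    assume "a = u @ us \<and> us @ b = w"
    then show ?thesis using lstar_step.hyps(1,2) lstar_nil[of L] by fastforce
  next
    assume split: "a @ us = u \<and> b = us @ w"
    from lstar_step.hyps(3)[OF conjunct2[OF split]] show ?thesis
    proof
      assume "us \<in> lstar L \<and> w \<in> lstar L"
      then show ?thesis using split lstar_step.hyps(1) by (auto intro: lstar.intros)
    next
      assume "\<exists>u' v y z. us = u' @ v \<and> u' \<in> lstar L \<and> v @ y \<in> L \<and> w = y @ z \<and> z \<in> lstar L"
      then obtain u' v y z where "us = u' @ v" "u' \<in> lstar L" "v @ y \<in> L" "w = y @ z" "z \<in> lstar L"
        by blast
      moreover have "a @ u' \<in> lstar L" using lstar_step.hyps(1) \<open>u' \<in> lstar L\<close> by (rule lstar.lstar_step)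
      ultimately show ?thesis using split by (metis append.assoc)
    qed
  qed
qed

lemma lquot_lstar:
  "lquot u (lstar L) = (if u \<in> lstar L then lstar L else {})
     \<union> conc (\<Union>{lquot v L | v. \<exists>u'. u = u' @ v \<and> u' \<in> lstar L}) (lstar L)"
  (is "_ = ?whole \<union> conc ?inside _")
proof (intro set_eqI iffI)
  fix w assume "w \<in> lquot u (lstar L)"
  then have "u @ w \<in> lstar L" by (simp add: lquot_def)
  from lstar_split[OF this] show "w \<in> ?whole \<union> conc ?inside (lstar L)"
  proof
    assume "u \<in> lstar L \<and> w \<in> lstar L"
    then show ?thesis by simp
  next
    assume "\<exists>u' v y z. u = u' @ v \<and> u' \<in> lstar L \<and> v @ y \<in> L \<and> w = y @ z \<and> z \<in> lstar L"
    then obtain u' v y z where "u = u' @ v" "u' \<in> lstar L" "y \<in> lquot v L" "w = y @ z" "z \<in> lstar L"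
      by (auto simp: lquot_def)
    then show ?thesis by (blast intro: concI)
  qed
next
  fix w assume "w \<in> ?whole \<union> conc ?inside (lstar L)"
  then show "w \<in> lquot u (lstar L)"
  proof
    assume "w \<in> ?whole"
    then show ?thesis by (simp add: lquot_def lstar_append split: if_splits)
  next
    assume "w \<in> conc ?inside (lstar L)"
    then obtain u' v y z where "u = u' @ v" "u' \<in> lstar L" "v @ y \<in> L" "w = y @ z" "z \<in> lstar L"
      by (auto simp: lquot_def elim!: concE)
    then have "u' @ ((v @ y) @ z) \<in> lstar L" by (intro lstar_append lstar.lstar_step)
    then show ?thesis using \<open>u = u' @ v\<close> \<open>w = y @ z\<close> by (simp add: lquot_def)
  qed
qed

lemma finite_range_lquot_finite:
  assumes "finite L"
  shows "finite (range (\<lambda>u. lquot u L))"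
proof (rule finite_subset)
  show "finite (insert {} ((\<lambda>u. lquot u L) ` (\<Union>w\<in>L. set (prefixes w))))"
    using assms by simp
  show "range (\<lambda>u. lquot u L) \<subseteq> insert {} ((\<lambda>u. lquot u L) ` (\<Union>w\<in>L. set (prefixes w)))"
  proof
    fix Q assume "Q \<in> range (\<lambda>u. lquot u L)"
    then obtain u where Q: "Q = lquot u L" by blast
    show "Q \<in> insert {} ((\<lambda>u. lquot u L) ` (\<Union>w\<in>L. set (prefixes w)))"
    proof (cases "Q = {}")
      case False
      then obtain v where "u @ v \<in> L" by (auto simp: Q lquot_def)
      then have "u \<in> (\<Union>w\<in>L. set (prefixes w))" by (rule UN_I) simp
      then show ?thesis using Q by blast
    qed simp
  qed
qed

lemma finite_range_lquot_conc:
  assumes "finite (range (\<lambda>u. lquot u L))" "finite (range (\<lambda>u. lquot u M))"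
  shows "finite (range (\<lambda>u. lquot u (conc L M)))"
proof (rule finite_surj)
  show "finite (range (\<lambda>u. lquot u L) \<times> Pow (range (\<lambda>u. lquot u M)))"
    using assms by simp
  show "range (\<lambda>u. lquot u (conc L M))
      \<subseteq> (\<lambda>(A, S). conc A M \<union> \<Union>S) ` (range (\<lambda>u. lquot u L) \<times> Pow (range (\<lambda>u. lquot u M)))"
  proof clarify
    fix u
    show "lquot u (conc L M) \<in> (\<lambda>(A, S). conc A M \<union> \<Union>S) ` (range (\<lambda>u. lquot u L) \<times> Pow (range (\<lambda>u. lquot u M)))"
      by (rule image_eqI[of _ _ "(lquot u L, {lquot v M | v. \<exists>u'. u = u' @ v \<and> u' \<in> L})"])
        (auto simp: lquot_conc)
  qed
qed

lemma finite_range_lquot_lstar: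
  assumes "finite (range (\<lambda>u. lquot u L))"
  shows "finite (range (\<lambda>u. lquot u (lstar L)))"
proof (rule finite_surj)
  show "finite ({{}, lstar L} \<times> Pow (range (\<lambda>u. lquot u L)))"
    using assms by simp
  show "range (\<lambda>u. lquot u (lstar L))
      \<subseteq> (\<lambda>(X, S). X \<union> conc (\<Union>S) (lstar L)) ` ({{}, lstar L} \<times> Pow (range (\<lambda>u. lquot u L)))"
  proof clarify
    fix u
    show "lquot u (lstar L) \<in> (\<lambda>(X, S). X \<union> conc (\<Union>S) (lstar L)) ` ({{}, lstar L} \<times> Pow (range (\<lambda>u. lquot u L)))"
      by (rule image_eqI[of _ _ "(if u \<in> lstar L then lstar L else {}, {lquot v L | v. \<exists>u'. u = u' @ v \<and> u' \<in> lstar L})"])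
        (auto simp: lquot_lstar)
  qed
qed

lemma finite_range_lquot: "reg_lang L \<Longrightarrow> finite (range (\<lambda>u. lquot u L))"
proof (induction rule: reg_lang.induct)
  case (rl_union L M)
  have "range (\<lambda>u. lquot u (L \<union> M)) \<subseteq> (\<lambda>(A, B). A \<union> B) ` (range (\<lambda>u. lquot u L) \<times> range (\<lambda>u. lquot u M))"
    by (auto simp: lquot_union)
  moreover have "finite (range (\<lambda>u. lquot u L) \<times> range (\<lambda>u. lquot u M))"
    using rl_union.IH by simp
  ultimately show ?case by (rule finite_surj[rotated])
qed (simp_all add: finite_range_lquot_finite finite_range_lquot_conc finite_range_lquot_lstar)

lemma lstar_letters: "w \<in> lstar L \<Longrightarrow> set w \<subseteq> \<Union>(set ` L)"
  by (induction rule: lstar.induct) auto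

lemma finite_letters: "reg_lang L \<Longrightarrow> finite (\<Union>(set ` L))"
proof (induction rule: reg_lang.induct)
  case (rl_conc L M)
  have "\<Union>(set ` conc L M) \<subseteq> \<Union>(set ` L) \<union> \<Union>(set ` M)" by (auto simp: conc_def)
  then show ?case using rl_conc.IH finite_subset by blast
next
  case (rl_star L)
  have "\<Union>(set ` lstar L) \<subseteq> \<Union>(set ` L)" using lstar_letters by blast
  then show ?case using rl_star.IH finite_subset by blast
qed auto

section \<open>Letter automata\<close>

definition letter_mat :: "(nat \<Rightarrow> nat \<Rightarrow> 'a option) \<Rightarrow> nat \<Rightarrow> nat \<Rightarrow> 'a list set" where
  "letter_mat E i j = (case E i j of None \<Rightarrow> {} | Some a \<Rightarrow> {[a]})"

(* A state is a left quotient tagged with the letter read on entering it, so every edge into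
   state j reads the same letter. *)
definition deriv_edge :: "(nat \<Rightarrow> 'a list set \<times> 'a option) \<Rightarrow> nat \<Rightarrow> nat \<Rightarrow> 'a option" where
  "deriv_edge st i j =
     (case snd (st j) of
        None \<Rightarrow> None
      | Some a \<Rightarrow> if fst (st j) = lquot [a] (fst (st i)) then Some a else None)"

lemma walk_deriv_edge: "walk n (letter_mat (deriv_edge st)) i w j \<Longrightarrow> fst (st j) = lquot w (fst (st i))"
proof (induction rule: walk.induct)
  case (walk_Nil i)
  then show ?case by simp
next
  case (walk_step i k u v j)
  then obtain a where "u = [a]" "fst (st k) = lquot [a] (fst (st i))"
    by (auto simp: letter_mat_def deriv_edge_def split: option.splits if_splits)
  with walk_step.IH show ?case by simp
qed

lemma walk_deriv_edge_complete:
  assumes closed: "\<And>i a w. i < n \<Longrightarrow> a # w \<in> fst (st i) \<Longrightarrow> \<exists>k<n. st k = (lquot [a] (fst (st i)), Some a)"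
  shows "i < n \<Longrightarrow> w \<in> fst (st i) \<Longrightarrow> \<exists>j<n. [] \<in> fst (st j) \<and> walk n (letter_mat (deriv_edge st)) i w j"
proof (induction w arbitrary: i)
  case Nil
  then show ?case by (auto intro: walk_Nil)
next
  case (Cons a w)
  then obtain k where k: "k < n" "st k = (lquot [a] (fst (st i)), Some a)" using closed by blast
  then have "[a] \<in> letter_mat (deriv_edge st) i k" by (simp add: letter_mat_def deriv_edge_def)
  moreover obtain j where "j < n" "[] \<in> fst (st j)" "walk n (letter_mat (deriv_edge st)) k w j"
    using Cons.IH[OF k(1)] Cons.prems(2) k(2) by (auto simp: lquot_def)
  ultimately show ?case using Cons.prems(1) k(1) walk_step[of i n k "[a]"] by auto
qed

lemma finite_tagged_lquots:
  assumes "reg_lang L"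
  shows "finite (insert (L, None) {(lquot (u @ [a]) L, Some a) | u a. lquot (u @ [a]) L \<noteq> {}})"
    (is "finite ?Q")
proof (rule finite_subset)
  show "?Q \<subseteq> insert (L, None) (range (\<lambda>u. lquot u L) \<times> Some ` \<Union>(set ` L))"
  proof
    fix q assume "q \<in> ?Q"
    then consider "q = (L, None)" | u a v where "q = (lquot (u @ [a]) L, Some a)" "(u @ [a]) @ v \<in> L"
      unfolding lquot_def by blast
    then show "q \<in> insert (L, None) (range (\<lambda>u. lquot u L) \<times> Some ` \<Union>(set ` L))"
      by cases force+
  qed
  show "finite (insert (L, None) (range (\<lambda>u. lquot u L) \<times> Some ` \<Union>(set ` L)))"
    using finite_range_lquot[OF assms] finite_letters[OF assms] by simp
qed

lemma reg_lang_automaton: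
  assumes "reg_lang L"
  shows "\<exists>n E i0 fin. i0 < n \<and> L = (\<Union>j\<in>{j. j < n \<and> fin j}. walks n (letter_mat E) i0 j)"
proof -
  define Q where "Q = insert (L, None) {(lquot (u @ [a]) L, Some a) | u a. lquot (u @ [a]) L \<noteq> {}}"
  have "finite Q" unfolding Q_def using assms by (rule finite_tagged_lquots)
  then obtain n :: nat and st where Q_st: "Q = st ` {i. i < n}"
    using finite_imp_nat_seg_image_inj_on by blast
  have "(L, None) \<in> st ` {i. i < n}" using Q_st Q_def by blast
  then obtain i0 where i0: "i0 < n" "st i0 = (L, None)" by force
  have closed: "\<exists>k<n. st k = (lquot [a] (fst (st i)), Some a)" if "i < n" "a # w \<in> fst (st i)" for i a w
  proof -
    have "st i \<in> Q" using Q_st that(1) by blast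
    then have "\<exists>u. fst (st i) = lquot u L" unfolding Q_def by (auto intro: exI[of _ "[]"])
    then obtain u where u: "fst (st i) = lquot u L" ..
    then have "w \<in> lquot (u @ [a]) L" using that(2) by (simp add: lquot_def)
    then have "(lquot (u @ [a]) L, Some a) \<in> Q" unfolding Q_def by blast
    then show ?thesis using Q_st u by auto
  qed
  have "w \<in> L \<longleftrightarrow> (\<exists>j<n. [] \<in> fst (st j) \<and> walk n (letter_mat (deriv_edge st)) i0 w j)" for w
    using walk_deriv_edge_complete[OF closed i0(1)] walk_deriv_edge[of n st i0 w] i0(2)
    by (auto simp: lquot_def)
  then have "L = (\<Union>j\<in>{j. j < n \<and> [] \<in> fst (st j)}. walks n (letter_mat (deriv_edge st)) i0 j)"
    by (auto simp: walks_def)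
  with i0(1) show ?thesis by (intro exI conjI)
qed

definition bp_part :: "(nat \<Rightarrow> nat \<Rightarrow> ('k::r_dioid + delta) option) \<Rightarrow> 'k tmat" where
  "bp_part E i j = (case E i j of Some (Inr Db) \<Rightarrow> gen Db | Some (Inr Dp) \<Rightarrow> gen Dp | _ \<Rightarrow> t_zero)"

definition dq_part :: "(nat \<Rightarrow> nat \<Rightarrow> ('k::r_dioid + delta) option) \<Rightarrow> 'k tmat" where
  "dq_part E i j = (case E i j of Some (Inr Dd) \<Rightarrow> gen Dd | Some (Inr Dq) \<Rightarrow> gen Dq | _ \<Rightarrow> t_zero)"

definition K_part :: "(nat \<Rightarrow> nat \<Rightarrow> ('k::r_dioid + delta) option) \<Rightarrow> nat \<Rightarrow> nat \<Rightarrow> 'k" where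
  "K_part E i j = (case E i j of Some (Inl k) \<Rightarrow> k | _ \<Rightarrow> 0)"

lemma embK_zero: "embK 0 = t_zero"
  unfolding embK_def t_zero_def
  by (rule tcls_eq) (simp add: tens_cong_def tens_rel_def least_r_congruence_base[THEN subsetD])

lemma bp_part_range: "bp_part E i j \<in> {t_zero, gen Db, gen Dp}"
  by (simp add: bp_part_def split: option.split sum.split delta.split)

lemma dq_part_range: "dq_part E i j \<in> {t_zero, gen Dd, gen Dq}"
  by (simp add: dq_part_def split: option.split sum.split delta.split)

lemma reg_lang_letter_mat: "reg_lang (letter_mat E i j)"
  by (simp add: letter_mat_def rl_finite split: option.split)

lemma letter_mat_split:
  fixes E :: "nat \<Rightarrow> nat \<Rightarrow> ('k::r_dioid + delta) option"
  shows "t_plus (t_plus (bp_part E i j) (embK (K_part E i j))) (dq_part E i j) = tcls (letter_mat E i j)"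
proof -
  have plus: "t_plus (t_plus (tcls A) (tcls B)) (tcls C) = tcls (A \<union> B \<union> C)"
    if "finite A" "finite B" "finite C" for A B C :: "('k + delta) list set"
    using that by (simp add: t_plus_tcls rl_finite rl_union)
  show ?thesis
  proof (cases "E i j")
    case None
    then show ?thesis
      by (simp add: bp_part_def dq_part_def K_part_def letter_mat_def embK_zero t_zero_def plus)
  next
    case (Some c)
    then show ?thesis
    proof (cases c)
      case (Inl k)
      with Some show ?thesis
        by (simp add: bp_part_def dq_part_def K_part_def letter_mat_def embK_def t_zero_def plus)
    next
      case (Inr e)
      with Some show ?thesis
        by (cases e) (simp_all add: bp_part_def dq_part_def K_part_def letter_mat_def embK_zero gen_def
            t_zero_def plus)
    qed
  qed
qed

lemma row_mat_col_tcls: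
  assumes "\<And>i. reg_lang (S i)" "\<And>j. reg_lang (F j)"
    and "\<And>i j. i < n \<Longrightarrow> j < n \<Longrightarrow> reg_lang (W i j)"
    and "\<And>i j. i < n \<Longrightarrow> j < n \<Longrightarrow> M i j = tcls (W i j)"
  shows "row_mat_col n (\<lambda>i. tcls (S i)) M (\<lambda>j. tcls (F j))
    = tcls (\<Union>j<n. conc (\<Union>i<n. conc (S i) (W i j)) (F j))"
proof -
  have "t_sum n (\<lambda>i. t_times (tcls (S i)) (M i j)) = tcls (\<Union>i<n. conc (S i) (W i j))" if "j < n" for j
    using that by (intro t_sum_tcls) (simp_all add: assms t_times_tcls rl_conc)
  then show ?thesis
    unfolding row_mat_col_def by (intro t_sum_tcls) (simp_all add: assms t_times_tcls rl_conc reg_lang_UN)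
qed

lemma row_mat_col_mat_star_tcls:
  assumes "\<And>i j. i < n \<Longrightarrow> j < n \<Longrightarrow> reg_lang (M i j)" "i0 < n"
  shows "row_mat_col n (\<lambda>i. if i = i0 then t_one else t_zero) (mat_star n (\<lambda>i j. tcls (M i j)))
      (\<lambda>j. if fin j then t_one else t_zero)
    = tcls (\<Union>j\<in>{j. j < n \<and> fin j}. walks n M i0 j)"
proof -
  have indicator: "(if P then t_one else t_zero) = tcls (if P then {[]} else {})" for P
    by (simp add: t_one_def t_zero_def)
  have "row_mat_col n (\<lambda>i. tcls (if i = i0 then {[]} else {})) (mat_star n (\<lambda>i j. tcls (M i j)))
      (\<lambda>j. tcls (if fin j then {[]} else {}))
    = tcls (\<Union>j<n. conc (\<Union>i<n. conc (if i = i0 then {[]} else {}) (walks n M i j)) (if fin j then {[]} else {}))"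
    by (rule row_mat_col_tcls) (simp_all add: assms rl_finite reg_lang_walks mat_star_tcls)
  moreover have "(\<Union>i<n. conc (if i = i0 then {[]} else {}) (walks n M i j)) = walks n M i0 j" for j
    using assms(2) by (auto split: if_splits)
  moreover have "(\<Union>j<n. conc (walks n M i0 j) (if fin j then {[]} else {}))
      = (\<Union>j\<in>{j. j < n \<and> fin j}. walks n M i0 j)"
    by (auto split: if_splits)
  ultimately show ?thesis by (simp add: indicator)
qed

lemma tensor_carrierE:
  assumes "\<phi> \<in> tensor_carrier"
  obtains L where "reg_lang L" "\<phi> = tcls L"
  using assms unfolding tensor_carrier_def tcls_def by (auto elim: quotientE)

theorem theorem5:
  fixes \<phi> :: "('k::r_dioid + delta) list set set"
  assumes "\<phi> \<in> tensor_carrier"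
  shows "\<exists>(n::nat) (S :: nat \<Rightarrow> ('k + delta) list set set) (F :: nat \<Rightarrow> ('k + delta) list set set)
            (U :: 'k tmat) (V :: 'k tmat) (X :: nat \<Rightarrow> nat \<Rightarrow> 'k).
     (\<forall>i<n. S i \<in> {t_zero, t_one}) \<and>
     (\<forall>j<n. F j \<in> {t_zero, t_one}) \<and>
     (\<forall>i<n. \<forall>j<n. U i j \<in> {t_zero, gen Db, gen Dp}) \<and>
     (\<forall>i<n. \<forall>j<n. V i j \<in> {t_zero, gen Dd, gen Dq}) \<and>
     \<phi> = row_mat_col n S
            (mat_star n (\<lambda>i j. t_plus (t_plus (U i j) (embK (X i j))) (V i j))) F"
proof -
  obtain L where L: "reg_lang L" "\<phi> = tcls L"
    using assms by (rule tensor_carrierE)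
  obtain n E i0 fin where i0: "i0 < n"
    and L_walks: "L = (\<Union>j\<in>{j. j < n \<and> fin j}. walks n (letter_mat E) i0 j)"
    using reg_lang_automaton[OF L(1)] by blast
  let ?S = "\<lambda>i. if i = i0 then t_one else t_zero"
  let ?F = "\<lambda>j. if fin j then t_one else t_zero"
  have "\<phi> = row_mat_col n ?S (mat_star n (\<lambda>i j. tcls (letter_mat E i j))) ?F"
    using i0 by (simp add: L L_walks row_mat_col_mat_star_tcls reg_lang_letter_mat)
  then have split: "\<phi> = row_mat_col n ?S
      (mat_star n (\<lambda>i j. t_plus (t_plus (bp_part E i j) (embK (K_part E i j))) (dq_part E i j))) ?F"
    by (simp add: letter_mat_split)
  show ?thesis
    by (rule exI[of _ n], rule exI[of _ ?S], rule exI[of _ ?F], rule exI[of _ "bp_part E"],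
        rule exI[of _ "dq_part E"], rule exI[of _ "K_part E"]) (simp add: split bp_part_range[simplified] dq_part_range[simplified])
qed

end
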